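(* Let $X$ be a Hausdorff $P$-space. The following are equivalent: (1) $X$ is locally Menger; (2) for each $x\in X$ and each open set $V$ with $x\in V$ there exist an open set $U$ and a Menger subspace $Y$ of $X$ such that $x\in U\subseteq Y\subseteq V$; (3) for each $x\in X$ there exists an open set $U$ with $x\in U$ such that $\overline{U}$ is Menger; (4) $X$ has a basis consisting of closed Menger neighbourhoods.
   Context: A space $X$ is Menger if for each sequence $(\mathcal{U}_n)$ of open covers of $X$ there is a sequence $(\mathcal{V}_n)$ with each $\mathcal{V}_n$ a finite subset of $\mathcal{U}_n$ and $\bigcup_{n}\bigcup\mathcal{V}_n=X$. A space $X$ is locally Menger if for each $x\in X$ there exist an open set $U$ and a Menger subspace $Y$ of $X$ with $x\in U\subseteq Y$. A $P$-space is a space in which every countable intersection of open sets is open. *)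

theory Defs
  imports "HOL-Analysis.Analysis"
begin

definition menger_space :: "'a topology \<Rightarrow> bool" where
  "menger_space X \<longleftrightarrow>
     (\<forall>\<U> :: nat \<Rightarrow> 'a set set.
        (\<forall>n. (\<forall>U\<in>\<U> n. openin X U) \<and> topspace X \<subseteq> \<Union>(\<U> n)) \<longrightarrow>
        (\<exists>\<V> :: nat \<Rightarrow> 'a set set.
            (\<forall>n. finite (\<V> n) \<and> \<V> n \<subseteq> \<U> n) \<and>
            topspace X \<subseteq> (\<Union>n. \<Union>(\<V> n))))"

definition menger_subspace :: "'a topology \<Rightarrow> 'a set \<Rightarrow> bool" where
  "menger_subspace X Y \<longleftrightarrow> Y \<subseteq> topspace X \<and> menger_space (subtopology X Y)"

text \<open>P-space: every countable intersection of open sets is open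
  (the empty intersection is read as the whole space).\<close>
definition p_space :: "'a topology \<Rightarrow> bool" where
  "p_space X \<longleftrightarrow>
     (\<forall>\<U>. countable \<U> \<and> (\<forall>U\<in>\<U>. openin X U) \<longrightarrow> openin X (topspace X \<inter> \<Inter>\<U>))"

definition locally_menger :: "'a topology \<Rightarrow> bool" where
  "locally_menger X \<longleftrightarrow>
     (\<forall>x\<in>topspace X. \<exists>U Y. openin X U \<and> menger_subspace X Y \<and> x \<in> U \<and> U \<subseteq> Y)"

end

theory Submission
  imports Defs
begin

text \<open>In a Hausdorff P-space a Lindelof set, in particular a Menger set, can be separated from
  a point outside it: the point needs one open neighbourhood for each member of a countable
  subcover, and these countably many neighbourhoods intersect to an open set. Consequently
  Menger sets are closed, and an open set W inside a Menger set contains the closure of a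
  smaller open neighbourhood of each of its points. Shrinking countably often in this way and
  intersecting (the P-space property once more) yields a clopen neighbourhood inside W, which is
  Menger as a closed subset of a Menger set. Thus (1) gives a base of clopen Menger sets, from
  which (2)--(4) follow; each of (2)--(4) trivially implies (1).\<close>

lemma closedin_subtopology_cover_extend:
  assumes "closedin X C" and "\<forall>U\<in>\<U>. openin (subtopology X C) U" and "topspace X \<inter> C \<subseteq> \<Union>\<U>"
  shows "\<forall>W\<in>insert (topspace X - C) {S. openin X S \<and> S \<inter> C \<in> \<U>}. openin X W"
    and "topspace X \<subseteq> \<Union>(insert (topspace X - C) {S. openin X S \<and> S \<inter> C \<in> \<U>})"
proof -
  show "\<forall>W\<in>insert (topspace X - C) {S. openin X S \<and> S \<inter> C \<in> \<U>}. openin X W"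
    using assms(1) unfolding closedin_def by auto
  show "topspace X \<subseteq> \<Union>(insert (topspace X - C) {S. openin X S \<and> S \<inter> C \<in> \<U>})"
  proof
    fix p assume p: "p \<in> topspace X"
    show "p \<in> \<Union>(insert (topspace X - C) {S. openin X S \<and> S \<inter> C \<in> \<U>})"
    proof (cases "p \<in> C")
      case True
      then obtain U where "U \<in> \<U>" "p \<in> U"
        using assms(3) p by blast
      moreover obtain S where "openin X S" "U = S \<inter> C"
        using assms(2) \<open>U \<in> \<U>\<close> unfolding openin_subtopology by blast
      ultimately show ?thesis
        by blast
    qed (use p in blast)
  qed
qed

lemma menger_space_closedin_subtopology:
  assumes "menger_space X" and "closedin X C"
  shows "menger_space (subtopology X C)"
  unfolding menger_space_def
proof (intro allI impI)
  fix \<U> :: "nat \<Rightarrow> 'a set set"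
  assume \<U>: "\<forall>n. (\<forall>U\<in>\<U> n. openin (subtopology X C) U) \<and> topspace (subtopology X C) \<subseteq> \<Union>(\<U> n)"
  define \<W> where "\<W> n = insert (topspace X - C) {S. openin X S \<and> S \<inter> C \<in> \<U> n}" for n
  have "(\<forall>W\<in>\<W> n. openin X W) \<and> topspace X \<subseteq> \<Union>(\<W> n)" for n
    using closedin_subtopology_cover_extend[OF assms(2), of "\<U> n"] \<U> unfolding \<W>_def by simp
  then obtain \<V> where \<V>: "\<forall>n. finite (\<V> n) \<and> \<V> n \<subseteq> \<W> n" "topspace X \<subseteq> (\<Union>n. \<Union>(\<V> n))"
    using assms(1)[unfolded menger_space_def, rule_format, of \<W>] by blast
  show "\<exists>\<V>. (\<forall>n. finite (\<V> n) \<and> \<V> n \<subseteq> \<U> n) \<and> topspace (subtopology X C) \<subseteq> (\<Union>n. \<Union>(\<V> n))"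
  proof (intro exI conjI allI)
    let ?\<V> = "\<lambda>n. (\<lambda>S. S \<inter> C) ` (\<V> n - {topspace X - C})"
    show "finite (?\<V> n)" for n
      using \<V>(1) by simp
    show "?\<V> n \<subseteq> \<U> n" for n
      using \<V>(1) unfolding \<W>_def by blast
    show "topspace (subtopology X C) \<subseteq> (\<Union>n. \<Union>(?\<V> n))"
    proof
      fix p assume "p \<in> topspace (subtopology X C)"
      then obtain n S where "p \<in> C" "S \<in> \<V> n" "p \<in> S"
        using \<V>(2) by auto
      then show "p \<in> (\<Union>n. \<Union>(?\<V> n))"
        by blast
    qed
  qed
qed

lemma menger_imp_Lindelof_space:
  assumes "menger_space X"
  shows "Lindelof_space X"
  unfolding Lindelof_space_alt
proof (intro allI impI)
  fix \<U> assume "(\<forall>U\<in>\<U>. openin X U) \<and> topspace X \<subseteq> \<Union>\<U>"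
  then obtain \<V> where \<V>: "\<forall>n. finite (\<V> n) \<and> \<V> n \<subseteq> \<U>" "topspace X \<subseteq> (\<Union>n::nat. \<Union>(\<V> n))"
    using assms unfolding menger_space_def by (elim allE[of _ "\<lambda>_. \<U>"]) blast
  show "\<exists>\<V>. countable \<V> \<and> \<V> \<subseteq> \<U> \<and> topspace X \<subseteq> \<Union>\<V>"
  proof (intro exI conjI)
    show "countable (\<Union>n. \<V> n)"
      using \<V>(1) by (simp add: countable_finite)
    show "(\<Union>n. \<V> n) \<subseteq> \<U>"
      using \<V>(1) by blast
    show "topspace X \<subseteq> \<Union>(\<Union>n. \<V> n)"
      using \<V>(2) by blast
  qed
qed

lemma menger_subspace_closedin_subset:
  assumes "menger_subspace X Y" and "closedin X C" and "C \<subseteq> Y"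
  shows "menger_subspace X C"
proof -
  have "menger_space (subtopology (subtopology X Y) C)"
    using assms menger_space_closedin_subtopology closedin_subset_topspace
    unfolding menger_subspace_def by blast
  then show ?thesis
    using assms closedin_subset unfolding menger_subspace_def
    by (simp add: subtopology_subtopology Int_absorb1)
qed

lemma Lindelof_space_subtopology_Diff_openin:
  assumes "Lindelof_space (subtopology X Y)" and "Y \<subseteq> topspace X" and "openin X W"
  shows "Lindelof_space (subtopology X (Y - W))"
proof -
  have "closedin (subtopology X Y) (Y - W)"
    unfolding closedin_subtopology
    using assms(2,3) by (intro exI[of _ "topspace X - W"]) auto
  then show ?thesis
    using Lindelof_space_closedin_subtopology[OF assms(1)]
    by (metis subtopology_subtopology Diff_subset Int_absorb1)
qed

lemma Hausdorff_p_space_separate_Lindelof: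
  assumes "Hausdorff_space X" and "p_space X"
    and "Lindelof_space (subtopology X K)" and "K \<subseteq> topspace X"
    and "x \<in> topspace X" and "x \<notin> K"
  obtains U V where "openin X U" "openin X V" "x \<in> U" "K \<subseteq> V" "disjnt U V"
proof -
  define \<A> where "\<A> = {A. openin X A \<and> (\<exists>B. openin X B \<and> x \<in> B \<and> disjnt A B)}"
  have "K \<subseteq> \<Union>\<A>"
  proof
    fix y assume "y \<in> K"
    then have "y \<in> topspace X" "y \<noteq> x"
      using assms(4,6) by auto
    then obtain A B where "openin X A" "openin X B" "y \<in> A" "x \<in> B" "disjnt A B"
      using assms(1)[unfolded Hausdorff_space_def, rule_format, of y x] assms(5) by blast
    then show "y \<in> \<Union>\<A>"
      unfolding \<A>_def by blast
  qed
  moreover have "\<forall>A\<in>\<A>. openin X A"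
    unfolding \<A>_def by blast
  ultimately obtain \<V> where \<V>: "countable \<V>" "\<V> \<subseteq> \<A>" "K \<subseteq> \<Union>\<V>"
    using assms(3)[unfolded Lindelof_space_subtopology_subset[OF assms(4)], rule_format, of \<A>]
    by blast
  have "\<forall>A\<in>\<V>. \<exists>B. openin X B \<and> x \<in> B \<and> disjnt A B"
    using \<V>(2) unfolding \<A>_def by blast
  then obtain b where b: "\<forall>A\<in>\<V>. openin X (b A) \<and> x \<in> b A \<and> disjnt A (b A)"
    by (rule bchoice[THEN exE])
  show thesis
  proof
    show "openin X (topspace X \<inter> \<Inter>(b ` \<V>))"
      using assms(2) \<V>(1) b unfolding p_space_def by (simp add: image_subset_iff)
    show "openin X (\<Union>\<V>)"
      using \<V>(2) unfolding \<A>_def by blast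
    show "x \<in> topspace X \<inter> \<Inter>(b ` \<V>)"
      using assms(5) b by blast
    show "disjnt (topspace X \<inter> \<Inter>(b ` \<V>)) (\<Union>\<V>)"
      using b by (fastforce simp: disjnt_def)
  qed (fact \<V>(3))
qed

lemma Hausdorff_p_space_Lindelof_imp_closedin:
  assumes "Hausdorff_space X" and "p_space X"
    and "Lindelof_space (subtopology X K)" and "K \<subseteq> topspace X"
  shows "closedin X K"
  unfolding closedin_def openin_subopen[of X "topspace X - K"]
proof (intro conjI assms(4) ballI)
  fix z assume "z \<in> topspace X - K"
  then obtain U V where "openin X U" "openin X V" "z \<in> U" "K \<subseteq> V" "disjnt U V"
    using Hausdorff_p_space_separate_Lindelof[OF assms] by blast
  then show "\<exists>T. openin X T \<and> z \<in> T \<and> T \<subseteq> topspace X - K"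
    using openin_subset by (fastforce simp: disjnt_def)
qed

lemma Hausdorff_p_space_closure_of_subset_Lindelof_nbhd:
  assumes "Hausdorff_space X" and "p_space X"
    and "Lindelof_space (subtopology X Y)" and "Y \<subseteq> topspace X"
    and "openin X W" and "x \<in> W" and "W \<subseteq> Y"
  obtains G where "openin X G" "x \<in> G" "X closure_of G \<subseteq> W"
proof -
  obtain U V where UV: "openin X U" "openin X V" "x \<in> U" "Y - W \<subseteq> V" "disjnt U V"
  proof (rule Hausdorff_p_space_separate_Lindelof[OF assms(1,2)])
    show "Lindelof_space (subtopology X (Y - W))"
      using assms(3,4,5) by (rule Lindelof_space_subtopology_Diff_openin)
  qed (use assms(4,6,7) in auto)
  have "X closure_of (W \<inter> U) \<subseteq> Y"
    using assms(7) Hausdorff_p_space_Lindelof_imp_closedin[OF assms(1-4)]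
    by (meson closure_of_minimal inf.coboundedI1)
  moreover have "X closure_of (W \<inter> U) \<subseteq> topspace X - V"
    using UV(1,2,5) openin_subset
    by (intro closure_of_minimal) (auto simp: disjnt_def closedin_diff)
  ultimately have "X closure_of (W \<inter> U) \<subseteq> W"
    using UV(4) by blast
  then show thesis
    using that assms(5,6) UV(1,3) openin_Int by blast
qed

lemma p_space_clopen_nbhd:
  assumes "p_space X" and "openin X V" and "x \<in> V"
    and shrink: "\<And>W. openin X W \<Longrightarrow> x \<in> W \<Longrightarrow> W \<subseteq> V \<Longrightarrow>
                    \<exists>G. openin X G \<and> x \<in> G \<and> X closure_of G \<subseteq> W"
  obtains C where "openin X C" "closedin X C" "x \<in> C" "C \<subseteq> V"
proof -
  have "\<forall>W. \<exists>G. openin X W \<and> x \<in> W \<and> W \<subseteq> V \<longrightarrow>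
                 openin X G \<and> x \<in> G \<and> X closure_of G \<subseteq> W"
    using shrink by blast
  then obtain f where f: "\<forall>W. openin X W \<and> x \<in> W \<and> W \<subseteq> V \<longrightarrow>
                            openin X (f W) \<and> x \<in> f W \<and> X closure_of (f W) \<subseteq> W"
    by (rule choice[THEN exE])
  define W where "W n = (f ^^ n) V" for n
  have W: "openin X (W n) \<and> x \<in> W n \<and> W n \<subseteq> V" for n
  proof (induction n)
    case 0
    show ?case
      using assms(2,3) by (simp add: W_def)
  next
    case (Suc n)
    then have "openin X (W (Suc n)) \<and> x \<in> W (Suc n) \<and> X closure_of W (Suc n) \<subseteq> W n"
      using f by (simp add: W_def)
    then show ?case
      using Suc closure_of_subset openin_subset by (meson order_trans)
  qed
  have closure_W: "X closure_of W (Suc n) \<subseteq> W n" for n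
    using f W by (simp add: W_def)
  define C where "C = topspace X \<inter> \<Inter>(range W)"
  have "X closure_of C \<subseteq> C"
  proof -
    have "X closure_of C \<subseteq> W n" for n
      using closure_of_mono[of C "W (Suc n)" X] closure_W unfolding C_def by blast
    then show ?thesis
      unfolding C_def using closure_of_subset_topspace by fastforce
  qed
  show thesis
  proof
    show "openin X C"
      using assms(1) W unfolding p_space_def C_def by (simp add: image_subset_iff)
    show "closedin X C"
      using \<open>X closure_of C \<subseteq> C\<close> closure_of_subset_eq unfolding C_def by blast
    show "x \<in> C" "C \<subseteq> V"
      using W openin_subset[of X V] assms(2) unfolding C_def by blast+
  qed
qed

lemma locally_menger_Hausdorff_p_space_clopen_nbhd:
  assumes "Hausdorff_space X" and "p_space X" and "locally_menger X"
    and "openin X V" and "x \<in> V"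
  shows "\<exists>C. openin X C \<and> closedin X C \<and> menger_subspace X C \<and> x \<in> C \<and> C \<subseteq> V"
proof -
  have "x \<in> topspace X"
    using assms(4,5) openin_subset by blast
  then obtain U Y where UY: "openin X U" "menger_subspace X Y" "x \<in> U" "U \<subseteq> Y"
    using assms(3) unfolding locally_menger_def by blast
  have Y: "Lindelof_space (subtopology X Y)" "Y \<subseteq> topspace X"
    using UY(2) menger_imp_Lindelof_space unfolding menger_subspace_def by auto
  have UV: "openin X (U \<inter> V)" "x \<in> U \<inter> V"
    using UY(1,3) assms(4,5) by auto
  have shrink: "\<exists>G. openin X G \<and> x \<in> G \<and> X closure_of G \<subseteq> W"
    if W: "openin X W" "x \<in> W" "W \<subseteq> U \<inter> V" for W
  proof -
    have "W \<subseteq> Y"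
      using W(3) UY(4) by blast
    then obtain G where "openin X G" "x \<in> G" "X closure_of G \<subseteq> W"
      by (rule Hausdorff_p_space_closure_of_subset_Lindelof_nbhd[OF assms(1,2) Y W(1,2)])
    then show ?thesis
      by blast
  qed
  obtain C where C: "openin X C" "closedin X C" "x \<in> C" "C \<subseteq> U \<inter> V"
    by (rule p_space_clopen_nbhd[OF assms(2) UV shrink])
  have "menger_subspace X C"
    using menger_subspace_closedin_subset[OF UY(2) C(2)] C(4) UY(4) by blast
  with C show ?thesis
    by blast
qed

theorem theorem3p7:
  fixes X :: "'a topology"
  assumes "Hausdorff_space X" and "p_space X"
  defines "P1 \<equiv> locally_menger X"
      and "P2 \<equiv> (\<forall>x\<in>topspace X. \<forall>V. openin X V \<and> x \<in> V \<longrightarrow>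
                  (\<exists>U Y. openin X U \<and> menger_subspace X Y \<and> x \<in> U \<and> U \<subseteq> Y \<and> Y \<subseteq> V))"
      and "P3 \<equiv> (\<forall>x\<in>topspace X. \<exists>U. openin X U \<and> x \<in> U \<and>
                  menger_subspace X (X closure_of U))"
      and "P4 \<equiv> (\<exists>\<B>. (\<forall>B\<in>\<B>. closedin X B \<and> menger_subspace X B) \<and>
                  (\<forall>x\<in>topspace X. \<forall>V. openin X V \<and> x \<in> V \<longrightarrow>
                     (\<exists>B\<in>\<B>. x \<in> X interior_of B \<and> B \<subseteq> V)))"
  shows "(P1 \<longleftrightarrow> P2) \<and> (P2 \<longleftrightarrow> P3) \<and> (P3 \<longleftrightarrow> P4)"
proof -
  note clopen = locally_menger_Hausdorff_p_space_clopen_nbhd[OF assms(1,2), folded P1_def]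
  have "P1 \<Longrightarrow> P2"
    unfolding P2_def using clopen by blast
  moreover have P1 if P2: P2
    unfolding P1_def locally_menger_def
  proof
    fix x assume "x \<in> topspace X"
    then show "\<exists>U Y. openin X U \<and> menger_subspace X Y \<and> x \<in> U \<and> U \<subseteq> Y"
      using P2[unfolded P2_def, rule_format, of x "topspace X"] by blast
  qed
  moreover have P3 if P1: P1
    unfolding P3_def
  proof
    fix x assume "x \<in> topspace X"
    then obtain C where "openin X C" "closedin X C" "menger_subspace X C" "x \<in> C"
      using clopen[OF P1 openin_topspace] by blast
    then show "\<exists>U. openin X U \<and> x \<in> U \<and> menger_subspace X (X closure_of U)"
      by (intro exI[of _ C]) (simp add: closure_of_closedin)
  qed
  moreover have P1 if P3: P3
    unfolding P1_def locally_menger_def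
  proof
    fix x assume "x \<in> topspace X"
    then obtain U where "openin X U" "x \<in> U" "menger_subspace X (X closure_of U)"
      using P3 unfolding P3_def by blast
    then show "\<exists>U Y. openin X U \<and> menger_subspace X Y \<and> x \<in> U \<and> U \<subseteq> Y"
      using closure_of_subset[OF openin_subset] by blast
  qed
  moreover have P4 if P1: P1
    unfolding P4_def
  proof (intro exI conjI)
    let ?\<B> = "{C. openin X C \<and> closedin X C \<and> menger_subspace X C}"
    show "\<forall>B\<in>?\<B>. closedin X B \<and> menger_subspace X B"
      by blast
    show "\<forall>x\<in>topspace X. \<forall>V. openin X V \<and> x \<in> V \<longrightarrow> (\<exists>B\<in>?\<B>. x \<in> X interior_of B \<and> B \<subseteq> V)"
    proof (intro ballI allI impI)
      fix x V assume "openin X V \<and> x \<in> V"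
      then obtain C where "openin X C" "closedin X C" "menger_subspace X C" "x \<in> C" "C \<subseteq> V"
        using clopen[OF P1] by blast
      then show "\<exists>B\<in>?\<B>. x \<in> X interior_of B \<and> B \<subseteq> V"
        by (intro bexI[of _ C]) (simp_all add: interior_of_openin)
    qed
  qed
  moreover have P1 if P4: P4
    unfolding P1_def locally_menger_def
  proof
    fix x assume x: "x \<in> topspace X"
    obtain \<B> where \<B>: "\<forall>B\<in>\<B>. closedin X B \<and> menger_subspace X B"
      "\<forall>x\<in>topspace X. \<forall>V. openin X V \<and> x \<in> V \<longrightarrow> (\<exists>B\<in>\<B>. x \<in> X interior_of B \<and> B \<subseteq> V)"
      using P4 unfolding P4_def by blast
    obtain B where "B \<in> \<B>" "x \<in> X interior_of B"
      using \<B>(2)[THEN bspec[OF _ x], THEN spec[of _ "topspace X"]] x by auto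
    then show "\<exists>U Y. openin X U \<and> menger_subspace X Y \<and> x \<in> U \<and> U \<subseteq> Y"
      using \<B>(1) interior_of_subset[of X B]
      by (intro exI[of _ "X interior_of B"] exI[of _ B]) auto
  qed
  ultimately show ?thesis
    by blast
qed

end
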